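(* Fix $T\ge0$. For $k\in\mathbb N_+$ let $\xi^k=\xi^{(a,k,T)}$. Then for all integers $\ell\ge k\ge1$, almost surely $\xi^\ell_t\ge\xi^k_t$ for all $t\in[0,T]$.
   Context: Let $\lambda>0$ and let $N$ be a Poisson process with intensity $\lambda$, arrival times $0<\sigma_1<\sigma_2<\cdots$, and natural filtration $\mathcal F_t=\sigma(N_s:s\le t)$. Let $F:[0,\infty)\to[0,\infty)$ be strictly increasing and strictly convex with $F(0)=0$. For $k\in\{0,1,\dots\}$ let $\mathcal A_k$ be the set of $(\mathcal F_t)$-adapted, integer-valued, nonnegative, non-increasing processes $\xi$ with $\xi_0=k$ whose values change only at arrival times of $N$, and $v(k,T)=\inf_{\xi\in\mathcal A_k}\mathbb E[\sum_{i:\sigma_i\le T}F(\xi_{\sigma_i-}-\xi_{\sigma_i})+F(\xi_T)]$. For $k\in\mathbb N_+$, $a(k,T)$ is the smallest minimizer over $a\in\{1,\dots,k\}$ of $v(k-a,T)+F(a)$, and $a(0,T)=0$. The inventory process $\xi^{(a,k,T)}$ is defined by $\xi^{(a,k,T)}_0=k$, constant between arrival times, and at each arrival time $\sigma_i\le T$: $\xi^{(a,k,T)}_{\sigma_i}=\xi^{(a,k,T)}_{\sigma_i-}-a(\xi^{(a,k,T)}_{\sigma_i-},T-\sigma_i)$. *)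

theory Defs
  imports "HOL-Probability.Probability"
begin

definition strictly_convex_on :: "real set \<Rightarrow> (real \<Rightarrow> real) \<Rightarrow> bool" where
  "strictly_convex_on S f \<longleftrightarrow> convex S \<and>
     (\<forall>x\<in>S. \<forall>y\<in>S. \<forall>u::real. x \<noteq> y \<longrightarrow> 0 < u \<longrightarrow> u < 1 \<longrightarrow>
        f (u * x + (1 - u) * y) < u * f x + (1 - u) * f y)"

text \<open>Poisson process of intensity l given by its arrival times:
  sigma 0 = 0 (convention), sigma 1 < sigma 2 < ... are the arrival times, and the
  interarrival times sigma (Suc i) - sigma i are i.i.d. exponential with rate l.\<close>
definition poisson_arrivals :: "'a measure \<Rightarrow> real \<Rightarrow> (nat \<Rightarrow> 'a \<Rightarrow> real) \<Rightarrow> bool" where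
  "poisson_arrivals M l \<sigma> \<longleftrightarrow> prob_space M \<and> 0 < l \<and>
     (\<forall>\<omega>\<in>space M. \<sigma> 0 \<omega> = 0) \<and>
     prob_space.indep_vars M (\<lambda>_. borel) (\<lambda>i \<omega>. \<sigma> (Suc i) \<omega> - \<sigma> i \<omega>) UNIV \<and>
     (\<forall>i. distributed M lborel (\<lambda>\<omega>. \<sigma> (Suc i) \<omega> - \<sigma> i \<omega>) (exponential_density l))"

definition Ncount :: "(nat \<Rightarrow> 'a \<Rightarrow> real) \<Rightarrow> real \<Rightarrow> 'a \<Rightarrow> nat" where
  "Ncount \<sigma> t \<omega> = card {i. 0 < i \<and> \<sigma> i \<omega> \<le> t}"

definition natfilt :: "'a measure \<Rightarrow> (nat \<Rightarrow> 'a \<Rightarrow> real) \<Rightarrow> real \<Rightarrow> 'a measure" where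
  "natfilt M \<sigma> t = sigma (space M)
     {Ncount \<sigma> s -` A \<inter> space M | s A. 0 \<le> s \<and> s \<le> t}"

text \<open>Left limit xi_{t-} of a non-increasing nat-valued path (t > 0).\<close>
definition lft :: "(real \<Rightarrow> 'a \<Rightarrow> nat) \<Rightarrow> real \<Rightarrow> 'a \<Rightarrow> nat" where
  "lft \<xi> t \<omega> = (INF s\<in>{0..<t}. \<xi> s \<omega>)"

definition admissible :: "'a measure \<Rightarrow> (nat \<Rightarrow> 'a \<Rightarrow> real) \<Rightarrow> nat \<Rightarrow> (real \<Rightarrow> 'a \<Rightarrow> nat) \<Rightarrow> bool" where
  "admissible M \<sigma> k \<xi> \<longleftrightarrow>
     (\<forall>t\<ge>0. \<xi> t \<in> measurable (natfilt M \<sigma> t) (count_space UNIV)) \<and>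
     (\<forall>\<omega>\<in>space M. \<xi> 0 \<omega> = k) \<and>
     (\<forall>\<omega>\<in>space M. \<forall>s t. 0 \<le> s \<longrightarrow> s \<le> t \<longrightarrow> \<xi> t \<omega> \<le> \<xi> s \<omega>) \<and>
     (\<forall>\<omega>\<in>space M. \<forall>s t. 0 \<le> s \<longrightarrow> s < t \<longrightarrow> \<xi> s \<omega> \<noteq> \<xi> t \<omega> \<longrightarrow>
        (\<exists>i>0. s < \<sigma> i \<omega> \<and> \<sigma> i \<omega> \<le> t))"

definition cost :: "(real \<Rightarrow> real) \<Rightarrow> (nat \<Rightarrow> 'a \<Rightarrow> real) \<Rightarrow> real \<Rightarrow> (real \<Rightarrow> 'a \<Rightarrow> nat) \<Rightarrow> 'a \<Rightarrow> real" where
  "cost F \<sigma> T \<xi> \<omega> =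
     (\<Sum>i\<in>{i. 0 < i \<and> \<sigma> i \<omega> \<le> T}. F (real (lft \<xi> (\<sigma> i \<omega>) \<omega> - \<xi> (\<sigma> i \<omega>) \<omega>)))
     + F (real (\<xi> T \<omega>))"

definition vfun :: "'a measure \<Rightarrow> (nat \<Rightarrow> 'a \<Rightarrow> real) \<Rightarrow> (real \<Rightarrow> real) \<Rightarrow> nat \<Rightarrow> real \<Rightarrow> ennreal" where
  "vfun M \<sigma> F k T = (INF \<xi>\<in>{\<xi>. admissible M \<sigma> k \<xi>}. \<integral>\<^sup>+ \<omega>. ennreal (cost F \<sigma> T \<xi> \<omega>) \<partial>M)"

definition aopt :: "'a measure \<Rightarrow> (nat \<Rightarrow> 'a \<Rightarrow> real) \<Rightarrow> (real \<Rightarrow> real) \<Rightarrow> nat \<Rightarrow> real \<Rightarrow> nat" where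
  "aopt M \<sigma> F k T = (if k = 0 then 0 else
     (LEAST a. 1 \<le> a \<and> a \<le> k \<and>
        (\<forall>b\<in>{1..k}. vfun M \<sigma> F (k - a) T + ennreal (F (real a))
                     \<le> vfun M \<sigma> F (k - b) T + ennreal (F (real b)))))"

fun invseq :: "'a measure \<Rightarrow> (nat \<Rightarrow> 'a \<Rightarrow> real) \<Rightarrow> (real \<Rightarrow> real) \<Rightarrow> nat \<Rightarrow> real \<Rightarrow> 'a \<Rightarrow> nat \<Rightarrow> nat" where
  "invseq M \<sigma> F k T \<omega> 0 = k"
| "invseq M \<sigma> F k T \<omega> (Suc i) =
     (let x = invseq M \<sigma> F k T \<omega> i in
      if \<sigma> (Suc i) \<omega> \<le> T then x - aopt M \<sigma> F x (T - \<sigma> (Suc i) \<omega>) else x)"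

definition xiproc :: "'a measure \<Rightarrow> (nat \<Rightarrow> 'a \<Rightarrow> real) \<Rightarrow> (real \<Rightarrow> real) \<Rightarrow> nat \<Rightarrow> real \<Rightarrow> real \<Rightarrow> 'a \<Rightarrow> nat" where
  "xiproc M \<sigma> F k T t \<omega> = invseq M \<sigma> F k T \<omega> (Ncount \<sigma> t \<omega>)"

end

theory Submission
  imports Defs
begin

text \<open>The optimal policy sells \<open>a(x,T)\<close> units at an arrival when holding \<open>x\<close>, leaving
  \<open>x - a(x,T)\<close>. This remaining inventory is non-decreasing in \<open>x\<close>: if holding one more unit
  made us keep strictly less, then exchanging the two minimisers (selling one unit less in
  the larger problem, one unit more in the smaller one) would lower the sum of the two
  minimal costs, because strict convexity of \<open>F\<close> makes \<open>F(a+1) + F(a'-1) < F a + F a'\<close>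
  whenever \<open>a + 1 < a'\<close>. Here the value function \<open>v\<close> enters only through being finite,
  and the argument works for every horizon, as it must since the policy at an arrival uses
  the remaining horizon \<open>T - \<sigma>\<^sub>i\<close>. Both inventory processes are driven by the same
  arrivals, so this monotonicity propagates along every path by induction on the number of
  arrivals; the inequality in fact holds surely, not just almost surely.\<close>

lemma strictly_convex_on_increment_less:
  fixes F :: "real \<Rightarrow> real"
  assumes sc: "strictly_convex_on {0..} F" and "0 \<le> x" "x < y" "0 < h"
  shows "F (x + h) + F y < F x + F (y + h)"
proof -
  define d where "d = y + h - x"
  have d: "0 < d" using assms by (simp add: d_def)
  define u where "u = (y - x) / d"
  define w where "w = h / d"
  have "0 < y - x" "y - x < d" "0 < h" "h < d" using assms by (auto simp: d_def)
  then have u: "0 < u" "u < 1" and w: "0 < w" "w < 1"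
    using d by (simp_all add: u_def w_def)
  have uw: "u + w = 1"
    using d by (simp add: u_def w_def d_def add_divide_distrib[symmetric])
  have "u * x + w * (y + h) = ((y - x) * x + h * (y + h)) / d"
    "w * x + u * (y + h) = (h * x + (y - x) * (y + h)) / d"
    by (simp_all add: u_def w_def add_divide_distrib)
  moreover have "(y - x) * x + h * (y + h) = (x + h) * d" "h * x + (y - x) * (y + h) = y * d"
    by (simp_all add: d_def algebra_simps)
  ultimately have "u * x + w * (y + h) = x + h" "w * x + u * (y + h) = y"
    using d by simp_all
  then have "u * x + (1 - u) * (y + h) = x + h" "w * x + (1 - w) * (y + h) = y"
    using uw by (simp_all add: eq_diff_eq[symmetric] add.commute)
  moreover have "F (c * x + (1 - c) * (y + h)) < c * F x + (1 - c) * F (y + h)"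
    if "0 < c" "c < 1" for c
    using sc assms that unfolding strictly_convex_on_def by auto
  ultimately have "F (x + h) + F y < (u * F x + (1 - u) * F (y + h)) + (w * F x + (1 - w) * F (y + h))"
    using u w by (metis add_strict_mono)
  also have "\<dots> = (u + w) * F x + (2 - (u + w)) * F (y + h)"
    by (simp add: algebra_simps)
  finally show ?thesis using uw by simp
qed

lemma minimizer_remainder_le_Suc:
  fixes V :: "nat \<Rightarrow> real" and F :: "real \<Rightarrow> real"
  assumes sc: "strictly_convex_on {0..} F"
    and a: "a \<in> {1..k}" "\<forall>b\<in>{1..k}. V (k - a) + F a \<le> V (k - b) + F b"
    and a': "a' \<in> {1..Suc k}"
      "\<forall>b\<in>{1..Suc k}. V (Suc k - a') + F a' \<le> V (Suc k - b) + F b"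
  shows "k - a \<le> Suc k - a'"
proof (rule ccontr)
  assume "\<not> ?thesis"
  then have gap: "a + 2 \<le> a'" using a(1) a'(1) by auto
  have mem: "a' - 1 \<in> {1..k}" "a + 1 \<in> {1..Suc k}" using gap a(1) a'(1) by auto
  have "V (k - a) + F a \<le> V (k - (a' - 1)) + F (real (a' - 1))"
    using a(2) mem(1) by blast
  moreover have "k - (a' - 1) = Suc k - a'" using gap a'(1) by auto
  moreover have "V (Suc k - a') + F a' \<le> V (Suc k - (a + 1)) + F (real (a + 1))"
    using a'(2) mem(2) by blast
  moreover have "F (real a + 1) + F (real (a' - 1)) < F a + F (real (a' - 1) + 1)"
    using strictly_convex_on_increment_less[OF sc, of "real a" "real (a' - 1)" 1] gap by simp
  moreover have "real (a' - 1) + 1 = real a'" using gap by (simp add: of_nat_diff)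
  ultimately show False by (simp add: add.commute)
qed

lemma poisson_arrivals_pos:
  assumes pa: "poisson_arrivals M l \<sigma>"
  shows "AE \<omega> in M. \<forall>i>0. 0 < \<sigma> i \<omega>"
proof -
  have ps: "prob_space M" using pa unfolding poisson_arrivals_def by simp
  have "AE \<omega> in M. 0 < \<sigma> (Suc i) \<omega> - \<sigma> i \<omega>" for i
  proof -
    have d: "distributed M lborel (\<lambda>\<omega>. \<sigma> (Suc i) \<omega> - \<sigma> i \<omega>) (exponential_density l)"
      using pa unfolding poisson_arrivals_def by simp
    have "AE x in lborel. 0 < exponential_density l x \<longrightarrow> 0 < x"
      using AE_lborel_singleton[of "0::real"]
      by eventually_elim (auto simp: exponential_density_def)
    then show ?thesis using prob_space.distributed_AE2[OF ps d, of "\<lambda>x. 0 < x"] by simp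
  qed
  then have "AE \<omega> in M. \<forall>i. \<sigma> i \<omega> < \<sigma> (Suc i) \<omega>"
    by (simp add: AE_all_countable)
  moreover have "AE \<omega> in M. \<sigma> 0 \<omega> = 0"
    using pa unfolding poisson_arrivals_def by (auto intro: AE_I2)
  ultimately show ?thesis
  proof eventually_elim
    case (elim \<omega>)
    then have "strict_mono (\<lambda>i. \<sigma> i \<omega>)" by (simp add: strict_mono_Suc_iff)
    then show ?case using elim(2) by (metis strict_monoD)
  qed
qed

lemma vfun_le_terminal_cost:
  assumes pa: "poisson_arrivals M l \<sigma>" and F0: "F 0 = 0"
  shows "vfun M \<sigma> F j T \<le> ennreal (F (real j))"
proof -
  have ps: "prob_space M" using pa unfolding poisson_arrivals_def by simp
  have adm: "admissible M \<sigma> j (\<lambda>_ _. j)"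
    unfolding admissible_def by auto
  have cost: "AE \<omega> in M. cost F \<sigma> T (\<lambda>_ _. j) \<omega> = F (real j)"
    using poisson_arrivals_pos[OF pa]
  proof eventually_elim
    case (elim \<omega>)
    then have "lft (\<lambda>_ _. j) (\<sigma> i \<omega>) \<omega> = j" if "0 < i" for i
      using that unfolding lft_def by (auto simp: atLeastLessThan_empty_iff)
    then show ?case unfolding cost_def by (simp add: F0)
  qed
  have "vfun M \<sigma> F j T \<le> (\<integral>\<^sup>+ \<omega>. ennreal (cost F \<sigma> T (\<lambda>_ _. j) \<omega>) \<partial>M)"
    unfolding vfun_def using adm by (intro INF_lower) auto
  also have "\<dots> = (\<integral>\<^sup>+ \<omega>. ennreal (F (real j)) \<partial>M)"
    by (rule nn_integral_cong_AE) (use cost in auto)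
  also have "\<dots> = ennreal (F (real j))"
    using ps by (simp add: prob_space.emeasure_space_1)
  finally show ?thesis .
qed

lemma vfun_finite:
  assumes "poisson_arrivals M l \<sigma>" and "F 0 = 0"
  shows "vfun M \<sigma> F j T < \<infinity>"
  using vfun_le_terminal_cost[where F = F, OF assms, of j T] by (simp add: le_less_trans)

lemma aopt_is_minimizer:
  assumes "1 \<le> k"
  shows "aopt M \<sigma> F k T \<in> {1..k}"
    and "\<forall>b\<in>{1..k}. vfun M \<sigma> F (k - aopt M \<sigma> F k T) T + ennreal (F (aopt M \<sigma> F k T))
                     \<le> vfun M \<sigma> F (k - b) T + ennreal (F b)"
proof -
  let ?g = "\<lambda>b. vfun M \<sigma> F (k - b) T + ennreal (F (real b))"
  have fin: "finite (?g ` {1..k})" "?g ` {1..k} \<noteq> {}" using assms by auto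
  obtain a where "a \<in> {1..k}" "?g a = Min (?g ` {1..k})"
    using Min_in[OF fin] by auto
  then have "\<exists>a. 1 \<le> a \<and> a \<le> k \<and> (\<forall>b\<in>{1..k}. ?g a \<le> ?g b)"
    using Min_le[OF fin(1)] by auto
  from LeastI_ex[OF this] assms
  show "aopt M \<sigma> F k T \<in> {1..k}"
    and "\<forall>b\<in>{1..k}. ?g (aopt M \<sigma> F k T) \<le> ?g b"
    unfolding aopt_def by auto
qed

lemma aopt_is_real_minimizer:
  fixes T :: real
  assumes pa: "poisson_arrivals M l \<sigma>" and F0: "F 0 = 0" and Fnn: "\<forall>x\<ge>0. F x \<ge> 0"
    and "1 \<le> k"
  defines "V \<equiv> \<lambda>j. enn2real (vfun M \<sigma> F j T)"
  shows "\<forall>b\<in>{1..k}. V (k - aopt M \<sigma> F k T) + F (aopt M \<sigma> F k T) \<le> V (k - b) + F b"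
proof
  fix b assume "b \<in> {1..k}"
  then have le: "vfun M \<sigma> F (k - aopt M \<sigma> F k T) T + ennreal (F (aopt M \<sigma> F k T))
              \<le> vfun M \<sigma> F (k - b) T + ennreal (F b)"
    using aopt_is_minimizer(2)[OF \<open>1 \<le> k\<close>] by blast
  have E: "vfun M \<sigma> F j T + ennreal (F (real n)) = ennreal (V j + F n)" for j n
  proof -
    have "vfun M \<sigma> F j T = ennreal (V j)"
      using vfun_finite[where F = F, OF pa F0, of j T] by (simp add: V_def)
    then show ?thesis using Fnn by (simp add: ennreal_plus V_def)
  qed
  have "0 \<le> V (k - b) + F b" using Fnn by (simp add: V_def)
  with le show "V (k - aopt M \<sigma> F k T) + F (aopt M \<sigma> F k T) \<le> V (k - b) + F b"
    unfolding E by simp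
qed

lemma mono_remaining_inventory:
  assumes pa: "poisson_arrivals M l \<sigma>" and sc: "strictly_convex_on {0..} F"
    and F0: "F 0 = 0" and Fnn: "\<forall>x\<ge>0. F x \<ge> 0"
  shows "mono (\<lambda>x. x - aopt M \<sigma> F x T)"
  unfolding mono_iff_le_Suc
proof
  fix k
  show "k - aopt M \<sigma> F k T \<le> Suc k - aopt M \<sigma> F (Suc k) T"
  proof (cases "k = 0")
    case False
    then have "1 \<le> k" "1 \<le> Suc k" by simp_all
    from minimizer_remainder_le_Suc[OF sc
        aopt_is_minimizer(1)[OF \<open>1 \<le> k\<close>] aopt_is_real_minimizer[OF pa F0 Fnn \<open>1 \<le> k\<close>]
        aopt_is_minimizer(1)[OF \<open>1 \<le> Suc k\<close>] aopt_is_real_minimizer[OF pa F0 Fnn \<open>1 \<le> Suc k\<close>]]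
    show ?thesis .
  qed (simp add: aopt_def)
qed

lemma invseq_mono_initial:
  assumes "\<And>S. mono (\<lambda>x. x - aopt M \<sigma> F x S)" and "k \<le> m"
  shows "invseq M \<sigma> F k T \<omega> i \<le> invseq M \<sigma> F m T \<omega> i"
proof (induction i)
  case (Suc i)
  then show ?case using monoD[OF assms(1) Suc.IH] by (simp add: Let_def)
qed (simp add: assms(2))

theorem lemma2p5:
  fixes M :: "'a measure" and l T :: real and \<sigma> :: "nat \<Rightarrow> 'a \<Rightarrow> real"
    and F :: "real \<Rightarrow> real" and k m :: nat
  assumes "poisson_arrivals M l \<sigma>"
    and "strict_mono_on {0..} F" and "strictly_convex_on {0..} F" and "F 0 = 0"
    and "\<forall>x\<ge>0. F x \<ge> 0"
    and "T \<ge> 0" and "1 \<le> k" and "k \<le> m"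
  shows "AE \<omega> in M. \<forall>t\<in>{0..T}. xiproc M \<sigma> F k T t \<omega> \<le> xiproc M \<sigma> F m T t \<omega>"
proof -
  have "mono (\<lambda>x. x - aopt M \<sigma> F x S)" for S
    using mono_remaining_inventory[where F = F, OF assms(1,3,4,5)] .
  from invseq_mono_initial[OF this \<open>k \<le> m\<close>] show ?thesis
    unfolding xiproc_def by simp
qed

end
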